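(* Let $n\ge 3$, $0<\ell\le m$, and let $J$ be a real symmetric diagonally balanced $n\times n$ matrix with $\ell\le J_{ij}\le m$ for all $i\ne j$. Let $S=(n-2)I_n+\mathbf{1}_n\mathbf{1}_n^\top$. Then $\ell S\preceq J\preceq mS$, and the eigenvalues $\lambda_1\le\dots\le\lambda_n$ of $J$ satisfy $$(n-2)\ell\le\lambda_i\le(n-2)m\ \ (1\le i\le n-1),\qquad 2(n-1)\ell\le\lambda_n\le 2(n-1)m.$$ If instead $J$ is only assumed diagonally dominant (with $\ell\le J_{ij}\le m$ for $i\neq j$), then $\ell S\preceq J$ and the lower bounds on the eigenvalues still hold.
   Context: For a real $n\times n$ matrix $J$, $\Delta_i(J)=|J_{ii}|-\sum_{j\ne i}|J_{ij}|$; $J$ is diagonally dominant if $\Delta_i(J)\ge0$ for all $i$ and diagonally balanced if $\Delta_i(J)=0$ for all $i$. $A\preceq B$ (Loewner order) means $B-A$ is positive semidefinite. $\mathbf{1}_n$ is the all-ones vector.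
   Formalization: The diagonal entries $J_{ii}$ are also assumed nonnegative, for both the diagonally balanced and the diagonally dominant case, so $|J_{ii}|$ in Delta_i equals $J_{ii}$. The statement above fails without it. *)

theory Defs
  imports "Jordan_Normal_Form.Matrix" "Jordan_Normal_Form.Char_Poly"
begin

definition row_excess :: "real mat \<Rightarrow> nat \<Rightarrow> real" where
  "row_excess J i = \<bar>J $$ (i, i)\<bar> - (\<Sum>j \<in> {0..<dim_col J} - {i}. \<bar>J $$ (i, j)\<bar>)"

definition diag_dominant :: "real mat \<Rightarrow> bool" where
  "diag_dominant J \<longleftrightarrow> (\<forall>i < dim_row J. row_excess J i \<ge> 0)"

definition diag_balanced :: "real mat \<Rightarrow> bool" where
  "diag_balanced J \<longleftrightarrow> (\<forall>i < dim_row J. row_excess J i = 0)"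

definition psd :: "real mat \<Rightarrow> bool" where
  "psd A \<longleftrightarrow> (\<forall>x \<in> carrier_vec (dim_row A). x \<bullet> (A *\<^sub>v x) \<ge> 0)"

definition loewner_le :: "real mat \<Rightarrow> real mat \<Rightarrow> bool" where
  "loewner_le A B \<longleftrightarrow> psd (B - A)"

definition S_mat :: "nat \<Rightarrow> real mat" where
  "S_mat n = real (n - 2) \<cdot>\<^sub>m 1\<^sub>m n + mat n n (\<lambda>_. 1)"

definition sorted_eigenvalues :: "real mat \<Rightarrow> real list \<Rightarrow> bool" where
  "sorted_eigenvalues J lams \<longleftrightarrow> sorted lams \<and> length lams = dim_row J \<and>
     char_poly J = (\<Prod>a \<leftarrow> lams. [:- a, 1:])"

end

theory Submission
  imports Defs "Jordan_Normal_Form.Schur_Decomposition"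
begin

text \<open>
  Both \<open>J - l S\<close> and \<open>m S - J\<close> are symmetric with a nonnegative diagonal that dominates the
  absolute off-diagonal row sums, hence positive semidefinite.  Since
  \<open>x\<^sup>T S x = (n - 2) \<parallel>x\<parallel>\<^sup>2 + (\<one>\<^sup>T x)\<^sup>2\<close>, the spectral theorem turns these Loewner bounds into
  eigenvalue bounds: unit eigenvectors give \<open>\<lambda>\<^sub>i \<ge> (n - 2) l\<close> and, with Cauchy--Schwarz,
  \<open>\<lambda>\<^sub>n \<le> (2n - 2) m\<close>; the Rayleigh quotient of \<open>\<one>\<close> gives \<open>\<lambda>\<^sub>n \<ge> (2n - 2) l\<close>; and a vector
  orthogonal to \<open>\<one>\<close> in the span of the two top eigenvectors gives \<open>\<lambda>\<^sub>n\<^sub>-\<^sub>1 \<le> (n - 2) m\<close>.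
\<close>

section \<open>Quadratic forms and diagonal dominance\<close>

lemma quadratic_form_eq_double_sum:
  fixes A :: "'a :: comm_semiring_0 mat"
  assumes "A \<in> carrier_mat n n" and "x \<in> carrier_vec n"
  shows "x \<bullet> (A *\<^sub>v x) = (\<Sum>i<n. \<Sum>j<n. x $ i * A $$ (i, j) * x $ j)"
  using assms by (auto simp: scalar_prod_def sum_distrib_left lessThan_atLeast0 mult.assoc
      intro!: sum.cong)

lemma quadratic_form_smult:
  fixes A :: "'a :: comm_semiring_0 mat"
  assumes "A \<in> carrier_mat n n" and "x \<in> carrier_vec n"
  shows "x \<bullet> ((c \<cdot>\<^sub>m A) *\<^sub>v x) = c * (x \<bullet> (A *\<^sub>v x))"
  using assms by (simp add: quadratic_form_eq_double_sum[of _ n] sum_distrib_left ac_simps)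

lemma quadratic_form_minus:
  fixes A B :: "'a :: comm_ring mat"
  assumes "A \<in> carrier_mat n n" and "B \<in> carrier_mat n n" and "x \<in> carrier_vec n"
  shows "x \<bullet> ((A - B) *\<^sub>v x) = x \<bullet> (A *\<^sub>v x) - x \<bullet> (B *\<^sub>v x)"
  using assms by (simp add: minus_mult_distrib_mat_vec scalar_prod_minus_distrib[of x n])

lemma loewner_le_quadratic_form:
  assumes "loewner_le A B" and "A \<in> carrier_mat n n" and "B \<in> carrier_mat n n"
    and "x \<in> carrier_vec n"
  shows "x \<bullet> (A *\<^sub>v x) \<le> x \<bullet> (B *\<^sub>v x)"
  using assms quadratic_form_minus[of B n A x] unfolding loewner_le_def psd_def by auto

lemma symmetric_mat_index:
  assumes "transpose_mat A = A" and "A \<in> carrier_mat n n" and "i < n" and "j < n"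
  shows "A $$ (j, i) = A $$ (i, j)"
proof -
  have "transpose_mat A $$ (i, j) = A $$ (j, i)" using assms(2-4) by simp
  then show ?thesis using assms(1) by simp
qed

lemma neg_abs_mult_sum_squares_half_le: "- (\<bar>a\<bar> * (x\<^sup>2 + y\<^sup>2) / 2) \<le> (a :: real) * x * y"
proof (cases "a \<ge> 0")
  case True
  have "0 \<le> a * (x + y)\<^sup>2" using True by simp
  also have "a * (x + y)\<^sup>2 = a * (x\<^sup>2 + y\<^sup>2) + 2 * (a * x * y)"
    by (simp add: power2_eq_square algebra_simps)
  finally show ?thesis using True by simp
next
  case False
  have "0 \<le> - a * (x - y)\<^sup>2" using False by (intro mult_nonneg_nonneg) auto
  also have "- a * (x - y)\<^sup>2 = - a * (x\<^sup>2 + y\<^sup>2) + 2 * (a * x * y)"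
    by (simp add: power2_eq_square algebra_simps)
  finally show ?thesis using False by simp
qed

lemma psd_if_offdiag_abs_sum_le_diag:
  fixes A :: "real mat"
  assumes A: "A \<in> carrier_mat n n" and sym: "transpose_mat A = A"
    and dom: "\<And>i. i < n \<Longrightarrow> (\<Sum>j \<in> {0..<n} - {i}. \<bar>A $$ (i, j)\<bar>) \<le> A $$ (i, i)"
  shows "psd A"
  unfolding psd_def
proof
  fix x :: "real vec" assume "x \<in> carrier_vec (dim_row A)"
  then have x: "x \<in> carrier_vec n" using A by auto
  define r where "r i j = (if i = j then 0 else \<bar>A $$ (i, j)\<bar>)" for i j
  have r_sym: "r i j = r j i" if "i < n" "j < n" for i j
    using that sym A by (auto simp: r_def symmetric_mat_index)
  have r_row: "(\<Sum>j<n. r i j) = (\<Sum>j \<in> {0..<n} - {i}. \<bar>A $$ (i, j)\<bar>)" if "i < n" for i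
    using that by (simp add: r_def lessThan_atLeast0 sum.If_cases Diff_eq Int_commute)
  \<comment> \<open>Bound each off-diagonal term by \<open>|A i j| (x i\<^sup>2 + x j\<^sup>2) / 2\<close>; by symmetry the two
    halves add up to the off-diagonal row sums.\<close>
  have "(\<Sum>i<n. (A $$ (i, i) - (\<Sum>j<n. r i j)) * (x $ i)\<^sup>2)
      = (\<Sum>i<n. \<Sum>j<n. (if i = j then A $$ (i, i) * (x $ i)\<^sup>2 else 0)
           - r i j * ((x $ i)\<^sup>2 + (x $ j)\<^sup>2) / 2)"
  proof -
    have swap: "(\<Sum>i<n. \<Sum>j<n. r i j * (x $ j)\<^sup>2) = (\<Sum>i<n. \<Sum>j<n. r i j * (x $ i)\<^sup>2)"
      by (subst sum.swap) (auto intro!: sum.cong simp: r_sym)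
    show ?thesis
      by (simp add: sum_subtractf sum.distrib sum_distrib_right add_divide_distrib
          algebra_simps swap flip: sum_divide_distrib)
  qed
  also have "\<dots> \<le> (\<Sum>i<n. \<Sum>j<n. x $ i * A $$ (i, j) * x $ j)"
  proof (intro sum_mono)
    fix i j
    show "(if i = j then A $$ (i, i) * (x $ i)\<^sup>2 else 0) - r i j * ((x $ i)\<^sup>2 + (x $ j)\<^sup>2) / 2
        \<le> x $ i * A $$ (i, j) * x $ j"
      using neg_abs_mult_sum_squares_half_le[of "A $$ (i, j)" "x $ i" "x $ j"]
      by (auto simp: r_def power2_eq_square algebra_simps)
  qed
  also have "\<dots> = x \<bullet> (A *\<^sub>v x)"
    using quadratic_form_eq_double_sum[OF A x] by simp
  finally show "0 \<le> x \<bullet> (A *\<^sub>v x)"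
    using dom r_row by (smt (verit) lessThan_iff mult_nonneg_nonneg sum_nonneg zero_le_power2)
qed

definition ones :: "nat \<Rightarrow> real vec" where
  "ones n = vec n (\<lambda>_. 1)"

lemma ones_carrier [simp]: "ones n \<in> carrier_vec n"
  by (simp add: ones_def)

lemma scalar_prod_ones: "x \<in> carrier_vec n \<Longrightarrow> x \<bullet> ones n = (\<Sum>i<n. x $ i)"
  by (simp add: ones_def scalar_prod_def lessThan_atLeast0)

lemma scalar_prod_self: "(x :: real vec) \<in> carrier_vec n \<Longrightarrow> x \<bullet> x = (\<Sum>i<n. (x $ i)\<^sup>2)"
  by (simp add: scalar_prod_def lessThan_atLeast0 power2_eq_square)

lemma ones_scalar_prod_ones: "ones n \<bullet> ones n = real n"
  unfolding scalar_prod_ones[OF ones_carrier] by (simp add: ones_def)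

lemma quadratic_form_diag_plus_const:
  fixes x :: "real vec"
  shows "(\<Sum>i<n. \<Sum>j<n. x $ i * ((if i = j then a else 0) + b) * x $ j)
    = a * (\<Sum>i<n. (x $ i)\<^sup>2) + b * (\<Sum>i<n. x $ i)\<^sup>2"
proof -
  have "(\<Sum>i<n. \<Sum>j<n. x $ i * ((if i = j then a else 0) + b) * x $ j)
      = (\<Sum>i<n. (\<Sum>j<n. (if i = j then a * (x $ i)\<^sup>2 else 0)) + (\<Sum>j<n. b * (x $ i * x $ j)))"
    by (intro sum.cong refl, subst sum.distrib[symmetric], intro sum.cong refl)
      (auto simp: power2_eq_square algebra_simps)
  moreover have "(\<Sum>i<n. x $ i)\<^sup>2 = (\<Sum>i<n. \<Sum>j<n. x $ i * x $ j)"
    by (simp add: power2_eq_square sum_product)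
  ultimately show ?thesis
    by (simp add: sum.distrib sum_distrib_left)
qed

text \<open>Cauchy--Schwarz against the all-ones vector, obtained from the diagonally dominant
  matrix \<open>n I - \<one>\<one>\<^sup>T\<close>.\<close>
lemma scalar_prod_ones_squared_le:
  assumes x: "x \<in> carrier_vec n"
  shows "(x \<bullet> ones n)\<^sup>2 \<le> real n * (x \<bullet> x)"
proof -
  define C where "C = mat n n (\<lambda>(i, j). (if i = j then real n else 0) + (- 1 :: real))"
  have C: "C \<in> carrier_mat n n" by (simp add: C_def)
  have "psd C"
  proof (rule psd_if_offdiag_abs_sum_le_diag[OF C])
    fix i assume i: "i < n"
    have "(\<Sum>j \<in> {0..<n} - {i}. \<bar>C $$ (i, j)\<bar>) = (\<Sum>j \<in> {0..<n} - {i}. 1)"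
      using i by (intro sum.cong) (auto simp: C_def)
    also have "\<dots> = real n - 1" using i by simp
    finally show "(\<Sum>j \<in> {0..<n} - {i}. \<bar>C $$ (i, j)\<bar>) \<le> C $$ (i, i)"
      using i by (simp add: C_def)
  qed (auto simp: C_def)
  then have "0 \<le> x \<bullet> (C *\<^sub>v x)" using x C by (simp add: psd_def)
  also have "x \<bullet> (C *\<^sub>v x) = (\<Sum>i<n. \<Sum>j<n. x $ i * ((if i = j then real n else 0) + - 1) * x $ j)"
    unfolding quadratic_form_eq_double_sum[OF C x] by (intro sum.cong refl) (simp add: C_def)
  also have "\<dots> = real n * (x \<bullet> x) - (x \<bullet> ones n)\<^sup>2"
    using quadratic_form_diag_plus_const[where a = "real n" and b = "- 1"]
    by (simp add: scalar_prod_self[OF x] scalar_prod_ones[OF x])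
  finally show ?thesis by simp
qed

lemma S_mat_carrier [simp]: "S_mat n \<in> carrier_mat n n"
  by (simp add: S_mat_def)

lemma S_mat_dim [simp]: "dim_row (S_mat n) = n" "dim_col (S_mat n) = n"
  by (simp_all add: S_mat_def)

lemma S_mat_index:
  "i < n \<Longrightarrow> j < n \<Longrightarrow> S_mat n $$ (i, j) = (if i = j then real (n - 2) else 0) + 1"
  by (simp add: S_mat_def)

lemma quadratic_form_S_mat:
  assumes x: "x \<in> carrier_vec n"
  shows "x \<bullet> (S_mat n *\<^sub>v x) = real (n - 2) * (x \<bullet> x) + (x \<bullet> ones n)\<^sup>2"
proof -
  have "x \<bullet> (S_mat n *\<^sub>v x)
      = (\<Sum>i<n. \<Sum>j<n. x $ i * ((if i = j then real (n - 2) else 0) + 1) * x $ j)"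
    unfolding quadratic_form_eq_double_sum[OF S_mat_carrier x]
    by (intro sum.cong refl) (simp add: S_mat_index)
  then show ?thesis
    by (simp add: quadratic_form_diag_plus_const scalar_prod_self[OF x] scalar_prod_ones[OF x])
qed

lemma quadratic_form_smult_S_mat:
  assumes "x \<in> carrier_vec n"
  shows "x \<bullet> ((c \<cdot>\<^sub>m S_mat n) *\<^sub>v x) = c * (real (n - 2) * (x \<bullet> x) + (x \<bullet> ones n)\<^sup>2)"
  using quadratic_form_smult[OF S_mat_carrier assms] quadratic_form_S_mat[OF assms] by simp

section \<open>Loewner bounds for diagonally dominant matrices\<close>

lemma row_excess_of_nonneg_row:
  assumes "J \<in> carrier_mat n n" and "i < n" and "\<And>j. j < n \<Longrightarrow> 0 \<le> J $$ (i, j)"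
  shows "row_excess J i = J $$ (i, i) - (\<Sum>j \<in> {0..<n} - {i}. J $$ (i, j))"
  using assms by (simp add: row_excess_def)

lemma smult_S_mat_loewner_le_if_diag_dominant:
  fixes J :: "real mat"
  assumes n: "2 \<le> n" and J: "J \<in> carrier_mat n n" and sym: "transpose_mat J = J"
    and diag: "\<And>i. i < n \<Longrightarrow> 0 \<le> J $$ (i, i)"
    and off: "\<And>i j. i < n \<Longrightarrow> j < n \<Longrightarrow> i \<noteq> j \<Longrightarrow> l \<le> J $$ (i, j)" and l: "0 \<le> l"
    and dom: "diag_dominant J"
  shows "loewner_le (l \<cdot>\<^sub>m S_mat n) J"
  unfolding loewner_le_def
proof (rule psd_if_offdiag_abs_sum_le_diag)
  let ?M = "J - l \<cdot>\<^sub>m S_mat n"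
  show "?M \<in> carrier_mat n n" by (simp add: minus_carrier_mat)
  show "transpose_mat ?M = ?M" using J sym by (intro eq_matI) (auto simp: symmetric_mat_index S_mat_def)
  fix i assume i: "i < n"
  have nonneg: "0 \<le> J $$ (i, j)" if "j < n" for j
    using diag off[OF i that] l i by (cases "i = j") force+
  have "(\<Sum>j \<in> {0..<n} - {i}. \<bar>?M $$ (i, j)\<bar>) = (\<Sum>j \<in> {0..<n} - {i}. J $$ (i, j) - l)"
    using J i off by (intro sum.cong) (auto simp: S_mat_index)
  also have "\<dots> = (\<Sum>j \<in> {0..<n} - {i}. J $$ (i, j)) - real (n - 1) * l"
    using i by (simp add: sum_subtractf)
  also have "\<dots> \<le> J $$ (i, i) - real (n - 1) * l"
    using dom i J row_excess_of_nonneg_row[OF J i nonneg] unfolding diag_dominant_def by force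
  also have "\<dots> = ?M $$ (i, i)"
    using J i n by (simp add: S_mat_index algebra_simps)
  finally show "(\<Sum>j \<in> {0..<n} - {i}. \<bar>?M $$ (i, j)\<bar>) \<le> ?M $$ (i, i)" .
qed

lemma loewner_le_smult_S_mat_if_diag_balanced:
  fixes J :: "real mat"
  assumes n: "2 \<le> n" and J: "J \<in> carrier_mat n n" and sym: "transpose_mat J = J"
    and diag: "\<And>i. i < n \<Longrightarrow> 0 \<le> J $$ (i, i)"
    and off: "\<And>i j. i < n \<Longrightarrow> j < n \<Longrightarrow> i \<noteq> j \<Longrightarrow> 0 \<le> J $$ (i, j) \<and> J $$ (i, j) \<le> m"
    and bal: "diag_balanced J"
  shows "loewner_le J (m \<cdot>\<^sub>m S_mat n)"
  unfolding loewner_le_def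
proof (rule psd_if_offdiag_abs_sum_le_diag)
  let ?M = "m \<cdot>\<^sub>m S_mat n - J"
  show "?M \<in> carrier_mat n n" using J by (simp add: minus_carrier_mat)
  show "transpose_mat ?M = ?M" using J sym by (intro eq_matI) (auto simp: symmetric_mat_index S_mat_def)
  fix i assume i: "i < n"
  have nonneg: "0 \<le> J $$ (i, j)" if "j < n" for j
    using diag off[OF i that] i by (cases "i = j") auto
  have "(\<Sum>j \<in> {0..<n} - {i}. \<bar>?M $$ (i, j)\<bar>) = (\<Sum>j \<in> {0..<n} - {i}. m - J $$ (i, j))"
    using J i off by (intro sum.cong) (auto simp: S_mat_index)
  also have "\<dots> = real (n - 1) * m - (\<Sum>j \<in> {0..<n} - {i}. J $$ (i, j))"
    using i by (simp add: sum_subtractf)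
  also have "\<dots> = real (n - 1) * m - J $$ (i, i)"
    using bal i J row_excess_of_nonneg_row[OF J i nonneg] by (simp add: diag_balanced_def)
  also have "\<dots> \<le> ?M $$ (i, i)"
    using J i n by (simp add: S_mat_index algebra_simps)
  finally show "(\<Sum>j \<in> {0..<n} - {i}. \<bar>?M $$ (i, j)\<bar>) \<le> ?M $$ (i, i)" .
qed

section \<open>Spectral theorem for real symmetric matrices\<close>

lemma conjugate_real_vec [simp]: "conjugate (v :: real vec) = v"
  by (intro eq_vecI) auto

lemma orthonormal_basis_extending:
  fixes v :: "real vec"
  assumes v: "v \<in> carrier_vec n" and v0: "v \<noteq> 0\<^sub>v n"
  shows "\<exists>W \<in> carrier_mat n n. transpose_mat W * W = 1\<^sub>m n \<and> (\<exists>c. col W 0 = c \<cdot>\<^sub>v v)"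
proof -
  have n: "n \<noteq> 0" using v v0 by auto
  interpret cof_vec_space n "TYPE(real)" .
  define b where "b = basis_completion v"
  from basis_completion[OF v v0, folded b_def]
  have dist_b: "distinct b" and indep: "\<not> lin_dep (set b)" and b: "set b \<subseteq> carrier_vec n"
    and hd_b: "hd b = v" and len_b: "length b = n" by auto
  from hd_b len_b n obtain vs where bv: "b = v # vs" by (cases b) auto
  define ws where "ws = gram_schmidt n b"
  from gram_schmidt_result[OF b dist_b indep refl, folded ws_def]
  have ws: "set ws \<subseteq> carrier_vec n" "corthogonal ws" "length ws = n" by (auto simp: len_b)
  have hd_ws: "hd ws = v" using gram_schmidt_hd[OF v, of vs] by (simp add: ws_def bv)
  have ws_carrier: "ws ! i \<in> carrier_vec n" if "i < n" for i
    using ws that by auto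
  have ws_pos: "0 < ws ! i \<bullet> ws ! i" if "i < n" for i
    using corthogonalD[OF ws(2), of i i] conjugate_square_ge_0_vec[of "ws ! i"] that ws
    by fastforce
  have ws_orth: "ws ! i \<bullet> ws ! j = 0" if "i < n" "j < n" "i \<noteq> j" for i j
    using corthogonalD[OF ws(2)] that ws by auto
  define us where "us = map (\<lambda>w. (1 / sqrt (w \<bullet> w)) \<cdot>\<^sub>v w) ws"
  have us: "length us = n" "\<And>i. i < n \<Longrightarrow> us ! i \<in> carrier_vec n"
    using ws by (auto simp: us_def)
  have us_orthonormal: "us ! i \<bullet> us ! j = (if i = j then 1 else 0)" if "i < n" "j < n" for i j
  proof -
    have "us ! i \<bullet> us ! j
        = (1 / sqrt (ws ! i \<bullet> ws ! i)) * (1 / sqrt (ws ! j \<bullet> ws ! j)) * (ws ! i \<bullet> ws ! j)"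
      using that ws ws_carrier[OF that(1)] ws_carrier[OF that(2)] by (auto simp: us_def)
    then show ?thesis using ws_orth[OF that] ws_pos[OF that(1)] by (auto simp: field_simps)
  qed
  define W where "W = mat_of_cols n us"
  have W: "W \<in> carrier_mat n n" and col_W: "\<And>i. i < n \<Longrightarrow> col W i = us ! i"
    using us by (auto simp: W_def)
  have "transpose_mat W * W = 1\<^sub>m n"
    using W col_W us_orthonormal by (intro eq_matI) auto
  moreover have "col W 0 = (1 / sqrt (v \<bullet> v)) \<cdot>\<^sub>v v"
    using col_W[of 0] n hd_ws ws(3) by (cases ws) (auto simp: us_def)
  ultimately show ?thesis using W by blast
qed

lemma orthogonal_mat_right_inverse:
  assumes "W \<in> carrier_mat n n" and "transpose_mat W * W = 1\<^sub>m n"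
  shows "W * transpose_mat W = (1\<^sub>m n :: real mat)"
  using mat_mult_left_right_inverse[OF _ assms(1)] assms by auto

lemma orthogonal_mat_mult:
  fixes V W :: "real mat"
  assumes W: "W \<in> carrier_mat n n" and WtW: "transpose_mat W * W = 1\<^sub>m n"
    and V: "V \<in> carrier_mat n n" and VtV: "transpose_mat V * V = 1\<^sub>m n"
  shows "transpose_mat (W * V) * (W * V) = 1\<^sub>m n"
proof -
  have "transpose_mat (W * V) * (W * V) = transpose_mat V * ((transpose_mat W * W) * V)"
    using W V by (simp add: transpose_mult[OF W V] assoc_mult_mat[of _ n n _ n _ n])
  then show ?thesis using WtW VtV V by simp
qed

lemma orthogonal_conjugate_inverse:
  fixes A W :: "real mat"
  assumes A: "A \<in> carrier_mat n n" and W: "W \<in> carrier_mat n n"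
    and WtW: "transpose_mat W * W = 1\<^sub>m n"
  shows "A = W * (transpose_mat W * A * W) * transpose_mat W"
proof -
  have "W * (transpose_mat W * A * W) * transpose_mat W
      = (W * transpose_mat W) * A * (W * transpose_mat W)"
    using A W by (simp add: assoc_mult_mat[of _ n n _ n _ n])
  then show ?thesis using A orthogonal_mat_right_inverse[OF W WtW] by simp
qed

lemma char_poly_orthogonal_conjugate:
  fixes A W :: "real mat"
  assumes A: "A \<in> carrier_mat n n" and W: "W \<in> carrier_mat n n"
    and WtW: "transpose_mat W * W = 1\<^sub>m n"
  shows "char_poly (transpose_mat W * A * W) = char_poly A"
proof -
  have "similar_mat_wit A (transpose_mat W * A * W) W (transpose_mat W)"
    using A W orthogonal_conjugate_inverse[OF A W WtW]
    by (intro similar_mat_witI[OF orthogonal_mat_right_inverse[OF W WtW] WtW]) auto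
  then show ?thesis by (metis char_poly_similar similar_mat_def)
qed

lemma orthogonal_one_block:
  fixes U D E :: "real mat"
  assumes U: "U \<in> carrier_mat k k" and UtU: "transpose_mat U * U = 1\<^sub>m k"
    and D: "D \<in> carrier_mat k k" and E: "E \<in> carrier_mat 1 1"
  defines "V \<equiv> four_block_mat (1\<^sub>m 1) (0\<^sub>m 1 k) (0\<^sub>m k 1) U"
  shows "V \<in> carrier_mat (Suc k) (Suc k)" and "transpose_mat V * V = 1\<^sub>m (Suc k)"
    and "four_block_mat E (0\<^sub>m 1 k) (0\<^sub>m k 1) (U * D * transpose_mat U)
      = V * four_block_mat E (0\<^sub>m 1 k) (0\<^sub>m k 1) D * transpose_mat V"
proof -
  have "V \<in> carrier_mat (1 + k) (1 + k)"
    unfolding V_def by (rule four_block_carrier_mat[OF one_carrier_mat U])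
  then show "V \<in> carrier_mat (Suc k) (Suc k)" by simp
  have Vt: "transpose_mat V = four_block_mat (1\<^sub>m 1) (0\<^sub>m 1 k) (0\<^sub>m k 1) (transpose_mat U)"
    unfolding V_def by (subst transpose_four_block_mat[OF _ _ _ U]) auto
  show "transpose_mat V * V = 1\<^sub>m (Suc k)"
    unfolding Vt unfolding V_def using U UtU
    by (subst mult_four_block_mat[of _ 1 1 _ k _ k _ _ 1 _ k]) auto
  show "four_block_mat E (0\<^sub>m 1 k) (0\<^sub>m k 1) (U * D * transpose_mat U)
      = V * four_block_mat E (0\<^sub>m 1 k) (0\<^sub>m k 1) D * transpose_mat V"
    unfolding Vt unfolding V_def using U D E
    by (simp add: mult_four_block_mat[of _ 1 1 _ k _ k _ _ 1 _ k])
qed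

lemma symmetric_deflation:
  fixes A W :: "real mat"
  assumes A: "A \<in> carrier_mat n n" and sym: "transpose_mat A = A"
    and W: "W \<in> carrier_mat n n" and WtW: "transpose_mat W * W = 1\<^sub>m n" and n: "0 < n"
    and ev: "A *\<^sub>v col W 0 = e \<cdot>\<^sub>v col W 0"
  shows "\<exists>B \<in> carrier_mat (n - 1) (n - 1). transpose_mat B = B \<and>
    transpose_mat W * A * W = four_block_mat (mat 1 1 (\<lambda>_. e)) (0\<^sub>m 1 (n - 1)) (0\<^sub>m (n - 1) 1) B"
proof -
  define A' where "A' = transpose_mat W * A * W"
  have A': "A' \<in> carrier_mat n n" using W A by (simp add: A'_def)
  have sym': "transpose_mat A' = A'"
    using W A sym by (simp add: A'_def transpose_mult[of _ n n _ n] assoc_mult_mat[of _ n n _ n _ n])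
  have col_W_orthonormal: "col W i \<bullet> col W j = (if i = j then 1 else 0)" if "i < n" "j < n" for i j
    using arg_cong[OF WtW, of "\<lambda>M. M $$ (i, j)"] that W by simp
  have col0: "A' $$ (i, 0) = (if i = 0 then e else 0)" if i: "i < n" for i
  proof -
    have "A' = transpose_mat W * (A * W)" using W A by (simp add: A'_def assoc_mult_mat[of _ n n _ n _ n])
    then have "A' $$ (i, 0) = col W i \<bullet> col (A * W) 0" using i n W A by simp
    also have "\<dots> = col W i \<bullet> (A *\<^sub>v col W 0)" using n W A by (simp del: col_mult)
    also have "\<dots> = e * (col W i \<bullet> col W 0)" using ev i n W by simp
    finally show ?thesis using col_W_orthonormal[OF i n] by simp
  qed
  define B where "B = mat (n - 1) (n - 1) (\<lambda>(i, j). A' $$ (Suc i, Suc j))"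
  have "B \<in> carrier_mat (n - 1) (n - 1)" by (simp add: B_def)
  moreover have "transpose_mat B = B"
    using A' sym' by (intro eq_matI) (auto simp: B_def symmetric_mat_index)
  moreover have "A' = four_block_mat (mat 1 1 (\<lambda>_. e)) (0\<^sub>m 1 (n - 1)) (0\<^sub>m (n - 1) 1) B"
    using A' n col0 symmetric_mat_index[OF sym' A'] by (intro eq_matI) (auto simp: B_def)
  ultimately show ?thesis by (auto simp: A'_def)
qed

definition diag_list_mat :: "nat \<Rightarrow> 'a :: zero list \<Rightarrow> 'a mat" where
  "diag_list_mat n es = mat n n (\<lambda>(i, j). if i = j then es ! i else 0)"

text \<open>The Schur decomposition of Jordan_Normal_Form does not record that its basis is
  orthonormal, so the deflation is repeated here with orthonormal bases, which lets the symmetric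
  structure pass to the deflated block.\<close>
lemma real_symmetric_diagonalization:
  fixes A :: "real mat"
  assumes "A \<in> carrier_mat n n" and "transpose_mat A = A"
    and "char_poly A = (\<Prod>e \<leftarrow> es. [:- e, 1:])"
  shows "\<exists>U \<in> carrier_mat n n. transpose_mat U * U = 1\<^sub>m n \<and>
    A = U * diag_list_mat n es * transpose_mat U"
  using assms
proof (induction es arbitrary: n A)
  case Nil
  then have "n = 0" using degree_monic_char_poly[of A n] by auto
  then show ?case using Nil.prems(1) by (intro bexI[of _ "1\<^sub>m n"]) auto
next
  case (Cons e es n A)
  note A = Cons.prems(1) and sym = Cons.prems(2)
  have cp: "char_poly A = [:- e, 1:] * (\<Prod>e \<leftarrow> es. [:- e, 1:])" using Cons.prems(3) by simp
  have "monic (\<Prod>e \<leftarrow> es. [:- e, 1:])" by (rule monic_prod_list) auto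
  then have "degree (char_poly A) = Suc (degree (\<Prod>e \<leftarrow> es. [:- e, 1:]))"
    unfolding cp by (subst degree_mult_eq) auto
  then obtain k where n: "n = Suc k" using degree_monic_char_poly[OF A] by (cases n) auto
  let ?E = "mat 1 1 (\<lambda>_. e)"
  have "eigenvalue A e" by (simp add: eigenvalue_root_char_poly[OF A] cp)
  then obtain v where v: "v \<in> carrier_vec n" "v \<noteq> 0\<^sub>v n" and Av: "A *\<^sub>v v = e \<cdot>\<^sub>v v"
    using A unfolding eigenvalue_def eigenvector_def by auto
  obtain W c where W: "W \<in> carrier_mat n n" and WtW: "transpose_mat W * W = 1\<^sub>m n"
    and col_W: "col W 0 = c \<cdot>\<^sub>v v"
    using orthonormal_basis_extending[OF v] by blast
  have "A *\<^sub>v col W 0 = e \<cdot>\<^sub>v col W 0"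
    using A v Av by (simp add: col_W mult_mat_vec smult_smult_assoc mult.commute)
  from symmetric_deflation[OF A sym W WtW _ this] n obtain B where
    B: "B \<in> carrier_mat k k" and sym_B: "transpose_mat B = B"
    and WAW: "transpose_mat W * A * W = four_block_mat ?E (0\<^sub>m 1 k) (0\<^sub>m k 1) B" by auto
  have "char_poly A = char_poly (four_block_mat ?E (0\<^sub>m 1 k) (0\<^sub>m k 1) B)"
    using char_poly_orthogonal_conjugate[OF A W WtW] by (simp add: WAW)
  also have "\<dots> = [:- e, 1:] * char_poly B"
    by (subst char_poly_four_block_zeros_col[OF _ _ B]) (auto simp: char_poly_defs det_def sign_def)
  finally have "char_poly B = (\<Prod>e \<leftarrow> es. [:- e, 1:])"
    using cp by (metis mult_cancel_left pCons_eq_0_iff zero_neq_one)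
  from Cons.IH[OF B sym_B this] obtain U where U: "U \<in> carrier_mat k k"
    and UtU: "transpose_mat U * U = 1\<^sub>m k"
    and B_eq: "B = U * diag_list_mat k es * transpose_mat U" by blast
  define V where "V = four_block_mat (1\<^sub>m 1) (0\<^sub>m 1 k) (0\<^sub>m k 1) U"
  have D: "diag_list_mat k es \<in> carrier_mat k k" by (simp add: diag_list_mat_def)
  note V = orthogonal_one_block[OF U UtU D, of ?E, folded V_def n]
  have "four_block_mat ?E (0\<^sub>m 1 k) (0\<^sub>m k 1) (diag_list_mat k es) = diag_list_mat n (e # es)"
    using n by (intro eq_matI) (auto simp: diag_list_mat_def)
  then have "A = W * (V * diag_list_mat n (e # es) * transpose_mat V) * transpose_mat W"
    using orthogonal_conjugate_inverse[OF A W WtW] V by (simp add: WAW B_eq)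
  also have "\<dots> = (W * V) * diag_list_mat n (e # es) * transpose_mat (W * V)"
  proof -
    have "diag_list_mat n (e # es) \<in> carrier_mat n n" by (simp add: diag_list_mat_def)
    then show ?thesis
      using W V(1) by (simp add: transpose_mult[OF W V(1)] assoc_mult_mat[of _ n n _ n _ n])
  qed
  finally show ?case using W V orthogonal_mat_mult[OF W WtW V(1,2)] by auto
qed

section \<open>Eigenvalues as values of the quadratic form\<close>

lemma sum_if_two_points:
  fixes n :: nat
  assumes "i < n" and "j < n" and "i \<noteq> j" and "\<And>k. g k 0 = (0 :: 'a :: comm_monoid_add)"
  shows "(\<Sum>k<n. g k (if k = i then p else if k = j then q else 0)) = g i p + g j q"
proof -
  have "(\<Sum>k<n. g k (if k = i then p else if k = j then q else 0))
      = (\<Sum>k<n. (if k = i then g k p else 0) + (if k = j then g k q else 0))"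
    using assms by (intro sum.cong) auto
  then show ?thesis using assms by (simp add: sum.distrib)
qed

lemma exists_nonzero_orthogonal_pair: "\<exists>p q. p * a + q * b = 0 \<and> 0 < p\<^sup>2 + (q\<^sup>2 :: real)"
proof (cases "a = 0 \<and> b = 0")
  case True
  then show ?thesis by (intro exI[of _ 0] exI[of _ 1]) simp
next
  case False
  then show ?thesis by (intro exI[of _ b] exI[of _ "- a"]) (auto simp: sum_power2_gt_zero_iff)
qed

context
  fixes J :: "real mat" and n :: nat and lams :: "real list"
  assumes J: "J \<in> carrier_mat n n" and sym: "transpose_mat J = J"
    and eigs: "sorted_eigenvalues J lams"
begin

lemma quadratic_form_in_eigenbasis:
  obtains U where "U \<in> carrier_mat n n" and "U * transpose_mat U = 1\<^sub>m n"
    and "\<And>y. y \<in> carrier_vec n \<Longrightarrow> (U *\<^sub>v y) \<bullet> (J *\<^sub>v (U *\<^sub>v y)) = (\<Sum>k<n. lams ! k * (y $ k)\<^sup>2)"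
    and "\<And>y z. y \<in> carrier_vec n \<Longrightarrow> z \<in> carrier_vec n \<Longrightarrow> (U *\<^sub>v y) \<bullet> (U *\<^sub>v z) = y \<bullet> z"
proof -
  obtain U where U: "U \<in> carrier_mat n n" and UtU: "transpose_mat U * U = 1\<^sub>m n"
    and J_eq: "J = U * diag_list_mat n lams * transpose_mat U"
    using real_symmetric_diagonalization[OF J sym] eigs by (auto simp: sorted_eigenvalues_def)
  define D where "D = diag_list_mat n lams"
  have D: "D \<in> carrier_mat n n" by (simp add: D_def diag_list_mat_def)
  have UtU_vec: "transpose_mat U *\<^sub>v (U *\<^sub>v y) = y" if "y \<in> carrier_vec n" for y
    using that U UtU by (simp flip: assoc_mult_mat_vec)
  have inner: "(U *\<^sub>v y) \<bullet> (U *\<^sub>v z) = y \<bullet> z" if "y \<in> carrier_vec n" "z \<in> carrier_vec n" for y z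
    using transpose_vec_mult_scalar[OF U that(2), of "U *\<^sub>v y"] U that UtU_vec by simp
  have "(U *\<^sub>v y) \<bullet> (J *\<^sub>v (U *\<^sub>v y)) = (\<Sum>k<n. lams ! k * (y $ k)\<^sup>2)" if y: "y \<in> carrier_vec n" for y
  proof -
    have "J *\<^sub>v (U *\<^sub>v y) = U *\<^sub>v (D *\<^sub>v y)"
      using U D y UtU_vec[OF y] by (simp add: J_eq D_def[symmetric] assoc_mult_mat_vec[of _ n n _ n])
    then have "(U *\<^sub>v y) \<bullet> (J *\<^sub>v (U *\<^sub>v y)) = y \<bullet> (D *\<^sub>v y)"
      using inner[OF y] D y by simp
    also have "\<dots> = (\<Sum>i<n. \<Sum>j<n. if i = j then lams ! i * (y $ i)\<^sup>2 else 0)"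
      unfolding quadratic_form_eq_double_sum[OF D y]
      by (intro sum.cong refl) (auto simp: D_def diag_list_mat_def power2_eq_square)
    finally show ?thesis by simp
  qed
  with U orthogonal_mat_right_inverse[OF U UtU] inner that show ?thesis by blast
qed

lemma sorted_eigenvalues_mono: "i \<le> j \<Longrightarrow> j < n \<Longrightarrow> lams ! i \<le> lams ! j"
  using eigs J by (simp add: sorted_eigenvalues_def sorted_nth_mono)

lemma sorted_eigenvalue_eq_quadratic_form:
  assumes k: "k < n"
  shows "\<exists>x \<in> carrier_vec n. x \<bullet> x = 1 \<and> x \<bullet> (J *\<^sub>v x) = lams ! k"
proof -
  obtain U where U: "U \<in> carrier_mat n n"
    and quad: "\<And>y. y \<in> carrier_vec n \<Longrightarrow> (U *\<^sub>v y) \<bullet> (J *\<^sub>v (U *\<^sub>v y)) = (\<Sum>k<n. lams ! k * (y $ k)\<^sup>2)"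
    and inner: "\<And>y z. y \<in> carrier_vec n \<Longrightarrow> z \<in> carrier_vec n \<Longrightarrow> (U *\<^sub>v y) \<bullet> (U *\<^sub>v z) = y \<bullet> z"
    using quadratic_form_in_eigenbasis by metis
  let ?x = "U *\<^sub>v unit_vec n k"
  have e: "unit_vec n k \<in> carrier_vec n" by simp
  have "?x \<bullet> ?x = 1" using inner[OF e e] k by simp
  moreover have "(\<Sum>j<n. lams ! j * (unit_vec n k $ j)\<^sup>2) = (\<Sum>j<n. if j = k then lams ! k else 0)"
    by (intro sum.cong) (auto simp: unit_vec_def)
  then have "?x \<bullet> (J *\<^sub>v ?x) = lams ! k" using quad[OF e] k by simp
  ultimately show ?thesis using U by auto
qed

lemma quadratic_form_le_largest_eigenvalue:
  assumes x: "x \<in> carrier_vec n"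
  shows "x \<bullet> (J *\<^sub>v x) \<le> lams ! (n - 1) * (x \<bullet> x)"
proof -
  obtain U where U: "U \<in> carrier_mat n n" and UUt: "U * transpose_mat U = 1\<^sub>m n"
    and quad: "\<And>y. y \<in> carrier_vec n \<Longrightarrow> (U *\<^sub>v y) \<bullet> (J *\<^sub>v (U *\<^sub>v y)) = (\<Sum>k<n. lams ! k * (y $ k)\<^sup>2)"
    and inner: "\<And>y z. y \<in> carrier_vec n \<Longrightarrow> z \<in> carrier_vec n \<Longrightarrow> (U *\<^sub>v y) \<bullet> (U *\<^sub>v z) = y \<bullet> z"
    using quadratic_form_in_eigenbasis by blast
  define y where "y = transpose_mat U *\<^sub>v x"
  have y: "y \<in> carrier_vec n" using U x by (simp add: y_def)
  have x_eq: "x = U *\<^sub>v y" using U UUt x by (simp add: y_def flip: assoc_mult_mat_vec)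
  have "x \<bullet> (J *\<^sub>v x) = (\<Sum>k<n. lams ! k * (y $ k)\<^sup>2)" using quad[OF y] x_eq by simp
  also have "\<dots> \<le> (\<Sum>k<n. lams ! (n - 1) * (y $ k)\<^sup>2)"
    by (intro sum_mono mult_right_mono sorted_eigenvalues_mono) auto
  also have "\<dots> = lams ! (n - 1) * (x \<bullet> x)"
    using inner[OF y y] x_eq by (simp add: scalar_prod_self[OF y] sum_distrib_left)
  finally show ?thesis .
qed

text \<open>One half of the min-max characterization of the second largest eigenvalue: the span of the
  two top eigenvectors meets every hyperplane.\<close>
lemma exists_orthogonal_quadratic_form_ge_second_largest:
  assumes n: "2 \<le> n" and c: "c \<in> carrier_vec n"
  shows "\<exists>x \<in> carrier_vec n. 0 < x \<bullet> x \<and> x \<bullet> c = 0 \<and> lams ! (n - 2) * (x \<bullet> x) \<le> x \<bullet> (J *\<^sub>v x)"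
proof -
  obtain U where U: "U \<in> carrier_mat n n" and UUt: "U * transpose_mat U = 1\<^sub>m n"
    and quad: "\<And>y. y \<in> carrier_vec n \<Longrightarrow> (U *\<^sub>v y) \<bullet> (J *\<^sub>v (U *\<^sub>v y)) = (\<Sum>k<n. lams ! k * (y $ k)\<^sup>2)"
    and inner: "\<And>y z. y \<in> carrier_vec n \<Longrightarrow> z \<in> carrier_vec n \<Longrightarrow> (U *\<^sub>v y) \<bullet> (U *\<^sub>v z) = y \<bullet> z"
    using quadratic_form_in_eigenbasis by blast
  define d where "d = transpose_mat U *\<^sub>v c"
  have d: "d \<in> carrier_vec n" using U c by (simp add: d_def)
  have c_eq: "c = U *\<^sub>v d" using U UUt c by (simp add: d_def flip: assoc_mult_mat_vec)
  obtain p q where pq: "p * d $ (n - 2) + q * d $ (n - 1) = 0" and pq0: "0 < p\<^sup>2 + q\<^sup>2"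
    using exists_nonzero_orthogonal_pair by blast
  define y where "y = vec n (\<lambda>k. if k = n - 2 then p else if k = n - 1 then q else 0)"
  have y: "y \<in> carrier_vec n" by (simp add: y_def)
  have two: "n - 2 < n" "n - 1 < n" "n - 2 \<noteq> n - 1" using n by auto
  have sum_y: "(\<Sum>k<n. g k (y $ k)) = g (n - 2) p + g (n - 1) q"
    if "\<And>k. g k 0 = 0" for g :: "nat \<Rightarrow> real \<Rightarrow> real"
  proof -
    have "(\<Sum>k<n. g k (y $ k)) = (\<Sum>k<n. g k (if k = n - 2 then p else if k = n - 1 then q else 0))"
      by (intro sum.cong) (auto simp: y_def)
    then show ?thesis using sum_if_two_points[OF two, of g p q] that by simp
  qed
  let ?x = "U *\<^sub>v y"
  have x: "?x \<in> carrier_vec n" using U y by simp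
  have xx: "?x \<bullet> ?x = p\<^sup>2 + q\<^sup>2"
    using inner[OF y y] sum_y[of "\<lambda>_ v. v\<^sup>2"] by (simp add: scalar_prod_self[OF y])
  have "?x \<bullet> c = y \<bullet> d" using inner[OF y d] c_eq by simp
  also have "\<dots> = (\<Sum>k<n. y $ k * d $ k)" using d by (simp add: scalar_prod_def lessThan_atLeast0)
  also have "\<dots> = 0" using sum_y[of "\<lambda>k v. v * d $ k"] pq by simp
  finally have "?x \<bullet> c = 0" .
  moreover have "lams ! (n - 2) * (?x \<bullet> ?x) \<le> ?x \<bullet> (J *\<^sub>v ?x)"
  proof -
    have "lams ! (n - 2) * q\<^sup>2 \<le> lams ! (n - 1) * q\<^sup>2"
      using sorted_eigenvalues_mono two by (intro mult_right_mono) auto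
    moreover have "?x \<bullet> (J *\<^sub>v ?x) = lams ! (n - 2) * p\<^sup>2 + lams ! (n - 1) * q\<^sup>2"
      using quad[OF y] sum_y[of "\<lambda>k v. lams ! k * v\<^sup>2"] by simp
    ultimately show ?thesis by (simp add: xx distrib_left)
  qed
  ultimately have "0 < ?x \<bullet> ?x \<and> ?x \<bullet> c = 0 \<and> lams ! (n - 2) * (?x \<bullet> ?x) \<le> ?x \<bullet> (J *\<^sub>v ?x)"
    using xx pq0 by simp
  then show ?thesis using x by blast
qed

lemma sorted_eigenvalues_lower_bounds:
  assumes n: "2 \<le> n" and l: "0 \<le> l" and lower: "loewner_le (l \<cdot>\<^sub>m S_mat n) J"
  shows "\<forall>k < n. real (n - 2) * l \<le> lams ! k" and "2 * real (n - 1) * l \<le> lams ! (n - 1)"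
proof -
  have form_ge: "l * (real (n - 2) * (x \<bullet> x) + (x \<bullet> ones n)\<^sup>2) \<le> x \<bullet> (J *\<^sub>v x)"
    if "x \<in> carrier_vec n" for x
    using loewner_le_quadratic_form[OF lower _ J that] that by (simp add: quadratic_form_smult_S_mat)
  show "\<forall>k < n. real (n - 2) * l \<le> lams ! k"
  proof (intro allI impI)
    fix k assume "k < n"
    then obtain x where x: "x \<in> carrier_vec n" "x \<bullet> x = 1" and "x \<bullet> (J *\<^sub>v x) = lams ! k"
      using sorted_eigenvalue_eq_quadratic_form by blast
    moreover have "0 \<le> l * (x \<bullet> ones n)\<^sup>2" using l by simp
    ultimately show "real (n - 2) * l \<le> lams ! k"
      using form_ge[OF x(1)] by (simp add: algebra_simps)
  qed
  have "l * (real (n - 2) * real n + (real n)\<^sup>2) \<le> lams ! (n - 1) * real n"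
    using form_ge[of "ones n"] quadratic_form_le_largest_eigenvalue[of "ones n"]
    by (simp add: ones_scalar_prod_ones)
  moreover have "real (n - 2) + real n = 2 * real (n - 1)" using n by simp
  ultimately have "real n * (2 * real (n - 1) * l) \<le> real n * lams ! (n - 1)"
    by (simp add: power2_eq_square algebra_simps flip: distrib_left)
  then show "2 * real (n - 1) * l \<le> lams ! (n - 1)" using n by simp
qed

lemma sorted_eigenvalues_upper_bounds:
  assumes n: "2 \<le> n" and m: "0 \<le> m" and upper: "loewner_le J (m \<cdot>\<^sub>m S_mat n)"
  shows "\<forall>i < n - 1. lams ! i \<le> real (n - 2) * m" and "lams ! (n - 1) \<le> 2 * real (n - 1) * m"
proof -
  have form_le: "x \<bullet> (J *\<^sub>v x) \<le> m * (real (n - 2) * (x \<bullet> x) + (x \<bullet> ones n)\<^sup>2)"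
    if "x \<in> carrier_vec n" for x
    using loewner_le_quadratic_form[OF upper J _ that] that by (simp add: quadratic_form_smult_S_mat)
  \<comment> \<open>Test the quadratic form on a vector orthogonal to \<open>\<one>\<close>, where \<open>m S\<close> acts as \<open>(n - 2) m\<close>.\<close>
  obtain x where x: "x \<in> carrier_vec n" "0 < x \<bullet> x" "x \<bullet> ones n = 0"
    and ge: "lams ! (n - 2) * (x \<bullet> x) \<le> x \<bullet> (J *\<^sub>v x)"
    using exists_orthogonal_quadratic_form_ge_second_largest[OF n ones_carrier] by blast
  have "x \<bullet> (J *\<^sub>v x) \<le> (x \<bullet> x) * (real (n - 2) * m)"
    using form_le[OF x(1)] x(3) by (simp add: algebra_simps)
  with ge have "(x \<bullet> x) * lams ! (n - 2) \<le> (x \<bullet> x) * (real (n - 2) * m)"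
    by (simp add: mult.commute)
  then have second: "lams ! (n - 2) \<le> real (n - 2) * m" using x(2) by simp
  show "\<forall>i < n - 1. lams ! i \<le> real (n - 2) * m"
  proof (intro allI impI)
    fix i assume "i < n - 1"
    then have "lams ! i \<le> lams ! (n - 2)" using n by (intro sorted_eigenvalues_mono) auto
    then show "lams ! i \<le> real (n - 2) * m" using second by simp
  qed
  obtain y where y: "y \<in> carrier_vec n" "y \<bullet> y = 1" and "y \<bullet> (J *\<^sub>v y) = lams ! (n - 1)"
    using sorted_eigenvalue_eq_quadratic_form[of "n - 1"] n by auto
  moreover have "m * (y \<bullet> ones n)\<^sup>2 \<le> m * real n"
    using scalar_prod_ones_squared_le[OF y(1)] y(2) m by (simp add: mult_left_mono)
  ultimately show "lams ! (n - 1) \<le> 2 * real (n - 1) * m"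
    using form_le[OF y(1)] n by (simp add: algebra_simps)
qed

end

theorem lemma7p1:
  fixes J :: "real mat" and n :: nat and l m :: real
  assumes n: "n \<ge> 3"
    and lm: "0 < l" "l \<le> m"
    and J: "J \<in> carrier_mat n n"
    and sym: "transpose_mat J = J"
    and diag_nonneg: "\<forall>i < n. J $$ (i, i) \<ge> 0"
    and offdiag: "\<forall>i < n. \<forall>j < n. i \<noteq> j \<longrightarrow> l \<le> J $$ (i, j) \<and> J $$ (i, j) \<le> m"
  shows "(diag_balanced J \<longrightarrow>
            loewner_le (l \<cdot>\<^sub>m S_mat n) J \<and> loewner_le J (m \<cdot>\<^sub>m S_mat n) \<and>
            (\<forall>lams. sorted_eigenvalues J lams \<longrightarrow>
               (\<forall>i < n - 1. real (n - 2) * l \<le> lams ! i \<and> lams ! i \<le> real (n - 2) * m) \<and>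
               2 * real (n - 1) * l \<le> lams ! (n - 1) \<and> lams ! (n - 1) \<le> 2 * real (n - 1) * m))
       \<and> (diag_dominant J \<longrightarrow>
            loewner_le (l \<cdot>\<^sub>m S_mat n) J \<and>
            (\<forall>lams. sorted_eigenvalues J lams \<longrightarrow>
               (\<forall>i < n - 1. real (n - 2) * l \<le> lams ! i) \<and>
               2 * real (n - 1) * l \<le> lams ! (n - 1)))"
proof -
  have n2: "2 \<le> n" using n by simp
  have diag: "\<And>i. i < n \<Longrightarrow> 0 \<le> J $$ (i, i)" using diag_nonneg by simp
  have lower: "loewner_le (l \<cdot>\<^sub>m S_mat n) J" if "diag_dominant J"
    using smult_S_mat_loewner_le_if_diag_dominant[OF n2 J sym diag _ _ that] offdiag lm by simp
  have upper: "loewner_le J (m \<cdot>\<^sub>m S_mat n)" if "diag_balanced J"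
    using loewner_le_smult_S_mat_if_diag_balanced[OF n2 J sym diag _ that] offdiag lm by force
  have balanced_dominant: "diag_balanced J \<Longrightarrow> diag_dominant J"
    by (simp add: diag_balanced_def diag_dominant_def)
  note eig_lower = sorted_eigenvalues_lower_bounds[OF J sym _ n2 _ lower]
  note eig_upper = sorted_eigenvalues_upper_bounds[OF J sym _ n2 _ upper]
  show ?thesis
    using lower upper balanced_dominant eig_lower eig_upper lm by auto
qed

end
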